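(* Let $(X,\|\cdot\|)$ be a uniformly convex Banach space and let $\{v_n\}_{n\in\mathbb{N}}$ be a sequence of vectors in $X$ such that $\|v_{n+m}\|\le \|v_n+v_m\|$ for all $n,m\in\mathbb{N}$. Then the limit $\lim_{n\to\infty}\frac{v_n}{n}$ exists in $X$.
   Context: $\mathbb{N}=\{1,2,3,\dots\}$. A Banach space $X$ is uniformly convex if for every $\varepsilon>0$ there exists $\delta>0$ such that for all $u,v\in X$ with $\|u\|=\|v\|=1$ and $\|u-v\|\ge\varepsilon$ we have $\|u+v\|\le 2-\delta$. *)

theory Defs
  imports "HOL-Analysis.Analysis"
begin

definition uniformly_convex :: "'a::real_normed_vector itself \<Rightarrow> bool" where
  "uniformly_convex _ \<longleftrightarrow>
     (\<forall>\<epsilon>>0. \<exists>\<delta>>0. \<forall>u v :: 'a. norm u = 1 \<and> norm v = 1 \<and> norm (u - v) \<ge> \<epsilon>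
        \<longrightarrow> norm (u + v) \<le> 2 - \<delta>)"

end

theory Submission
  imports Defs
begin

text \<open>
  The norms \<open>a n = norm (v n)\<close> are subadditive, so by Fekete's argument \<open>a n / n\<close> tends to
  \<open>r = inf (a n / n)\<close>. If \<open>r = 0\<close> the sequence \<open>v n / n\<close> tends to \<open>0\<close>; otherwise it suffices
  that the directions \<open>sgn (v n)\<close> form a Cauchy sequence. Uniform convexity makes the
  directions of \<open>v k\<close> and \<open>v p\<close> close as soon as the defect
  \<open>a k + a p - a (k + p)\<close> is small compared with \<open>min (a k) (a p)\<close>. The defects of the pairs
  \<open>(n, j n)\<close> telescope, so their sum over \<open>j < K\<close> is at most \<open>K (a n - n r)\<close>; hence for \<open>n \<le> m\<close>
  some multiple \<open>p\<close> of \<open>n\<close> with \<open>m < p \<le> 4 m\<close> has a small defect against \<open>n\<close>. Its defect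
  against \<open>m\<close> is small too, because \<open>a k \<approx> k r\<close> for all large \<open>k\<close>, so the directions of
  \<open>v n\<close> and \<open>v m\<close> are both close to that of \<open>v p\<close>.
\<close>

lemma uniformly_convex_norm_add_le:
  assumes "uniformly_convex TYPE('a::real_normed_vector)" and "0 < \<epsilon>"
  obtains \<delta> where "0 < \<delta>"
    and "\<And>x y :: 'a. \<epsilon> \<le> norm (sgn x - sgn y) \<Longrightarrow>
           norm (x + y) \<le> norm x + norm y - \<delta> * min (norm x) (norm y)"
proof -
  obtain \<delta> where "0 < \<delta>" and unit: "\<And>u w :: 'a. norm u = 1 \<Longrightarrow> norm w = 1 \<Longrightarrow>
      \<epsilon> \<le> norm (u - w) \<Longrightarrow> norm (u + w) \<le> 2 - \<delta>"
    using assms unfolding uniformly_convex_def by metis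
  have one_sided: "norm (x + y) \<le> norm x + norm y - \<delta> * norm x"
    if far: "\<epsilon> \<le> norm (sgn x - sgn y)" and le: "norm x \<le> norm y" for x y :: 'a
  proof (cases "x = 0")
    case False
    with le have "y \<noteq> 0" by auto
    with False have "norm (sgn x + sgn y) \<le> 2 - \<delta>"
      using unit far by (simp add: norm_sgn)
    have "norm (x + y) = norm (norm x *\<^sub>R (sgn x + sgn y) + (norm y - norm x) *\<^sub>R sgn y)"
      using False \<open>y \<noteq> 0\<close> by (simp add: sgn_div_norm algebra_simps)
    also have "\<dots> \<le> norm x * norm (sgn x + sgn y) + (norm y - norm x)"
      using norm_triangle_ineq[of "norm x *\<^sub>R (sgn x + sgn y)" "(norm y - norm x) *\<^sub>R sgn y"]
        le \<open>y \<noteq> 0\<close> by (simp add: norm_sgn)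
    also have "\<dots> \<le> norm x * (2 - \<delta>) + (norm y - norm x)"
      using mult_left_mono[OF \<open>norm (sgn x + sgn y) \<le> 2 - \<delta>\<close> norm_ge_zero] by simp
    finally show ?thesis by (simp add: algebra_simps)
  qed simp
  show ?thesis
  proof (rule that[OF \<open>0 < \<delta>\<close>])
    fix x y :: 'a
    assume far: "\<epsilon> \<le> norm (sgn x - sgn y)"
    show "norm (x + y) \<le> norm x + norm y - \<delta> * min (norm x) (norm y)"
    proof (cases "norm x \<le> norm y")
      case True
      then show ?thesis using one_sided[OF far] by (simp add: min_def)
    next
      case False
      then show ?thesis using one_sided[of y x] far
        by (simp add: min_def add.commute norm_minus_commute)
    qed
  qed
qed

locale subadditive_seq =
  fixes A :: "nat \<Rightarrow> real"
  assumes nonneg: "\<And>n. 0 \<le> A n"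
    and subadd: "\<And>n m. 1 \<le> n \<Longrightarrow> 1 \<le> m \<Longrightarrow> A (n + m) \<le> A n + A m"
begin

definition rate :: real where
  "rate = Inf ((\<lambda>n. A n / real n) ` {1..})"

lemma rate_nonneg: "0 \<le> rate"
  unfolding rate_def by (rule cInf_greatest) (auto simp: nonneg)

lemma rate_le: "1 \<le> n \<Longrightarrow> real n * rate \<le> A n"
proof -
  assume "1 \<le> n"
  have "bdd_below ((\<lambda>n. A n / real n) ` {1..})"
    by (rule bdd_belowI[where m = 0]) (auto simp: nonneg)
  then have "rate \<le> A n / real n"
    unfolding rate_def using \<open>1 \<le> n\<close> by (auto intro: cInf_lower)
  then show ?thesis
    using \<open>1 \<le> n\<close> by (simp add: le_divide_eq mult.commute)
qed

lemma le_multiple_add: "1 \<le> k \<Longrightarrow> 1 \<le> r \<Longrightarrow> A (q * k + r) \<le> real q * A k + A r"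
proof (induction q)
  case (Suc q)
  have "A (Suc q * k + r) = A ((q * k + r) + k)"
    by (simp add: algebra_simps)
  also have "\<dots> \<le> A (q * k + r) + A k"
    using Suc.prems by (intro subadd) auto
  also have "\<dots> \<le> real (Suc q) * A k + A r"
    using Suc by (simp add: algebra_simps)
  finally show ?case .
qed simp

lemma eventually_le_rate:
  assumes "0 < e"
  shows "eventually (\<lambda>n. A n \<le> real n * (rate + e)) sequentially"
proof -
  obtain k where k: "1 \<le> k" "A k / real k < rate + e / 2"
    using cInf_lessD[of "(\<lambda>n. A n / real n) ` {1..}" "rate + e / 2"] assms
    by (auto simp: rate_def)
  define M where "M = (\<Sum>r = 1..k. A r)"
  have le_M: "A r \<le> M" if "r \<in> {1..k}" for r
    unfolding M_def by (rule member_le_sum) (use that nonneg in auto)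
  obtain N :: nat where N: "2 * M / e \<le> real N"
    using real_arch_simple by blast
  have "A n \<le> real n * (rate + e)" if n: "max 1 N \<le> n" for n
  proof -
    define q r where "q = (n - 1) div k" and "r = (n - 1) mod k + 1"
    have n_eq: "n = q * k + r" and r: "r \<in> {1..k}"
      using n k(1) by (auto simp: q_def r_def Suc_leI)
    have "A n \<le> real q * A k + M"
      using le_multiple_add[OF k(1), of r q] le_M[OF r] r n_eq by auto
    also have "real q * A k = real (q * k) * (A k / real k)"
      using k(1) by simp
    also have "\<dots> \<le> real n * (rate + e / 2)"
      using k(2) n_eq nonneg[of k] by (intro mult_mono) auto
    also have "M \<le> real n * (e / 2)"
    proof -
      have "2 * M / e \<le> real n"
        using N n by simp
      then show ?thesis
        using assms by (simp add: field_simps)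
    qed
    finally show ?thesis by (simp add: algebra_simps)
  qed
  then show ?thesis
    by (rule eventually_sequentiallyI)
qed

lemma quotient_tendsto_rate: "(\<lambda>n. A n / real n) \<longlonglongrightarrow> rate"
proof (rule order_tendstoI)
  fix y assume "y < rate"
  have "y < A n / real n" if "1 \<le> n" for n
  proof -
    have "real n * y < real n * rate"
      using \<open>y < rate\<close> that by (intro mult_strict_left_mono) auto
    with rate_le[OF that] have "real n * y < A n"
      by linarith
    with that show ?thesis
      by (simp add: pos_less_divide_eq mult.commute)
  qed
  then show "eventually (\<lambda>n. y < A n / real n) sequentially"
    by (rule eventually_sequentiallyI)
next
  fix y assume "rate < y"
  then have "0 < (y - rate) / 2"
    by simp
  from eventually_conj[OF eventually_le_rate[OF this] eventually_ge_at_top[of 1]]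
  show "eventually (\<lambda>n. A n / real n < y) sequentially"
  proof (rule eventually_mono)
    fix n assume "A n \<le> real n * (rate + (y - rate) / 2) \<and> 1 \<le> n"
    then have "A n / real n \<le> rate + (y - rate) / 2"
      by (simp add: pos_divide_le_eq mult.commute)
    also have "\<dots> < y"
      using \<open>rate < y\<close> by (simp add: field_simps)
    finally show "A n / real n < y" .
  qed
qed

lemma sum_defects: "1 \<le> K \<Longrightarrow>
  (\<Sum>j = 1..<K. A n + A (j * n) - A (n + j * n)) = real K * A n - A (K * n)"
proof (induction K)
  case (Suc K)
  then show ?case
    by (cases "K = 0") (simp_all add: algebra_simps)
qed simp

lemma exists_small_defect:
  assumes "1 \<le> n" and "1 \<le> J"
  shows "\<exists>j \<in> {J..<2 * J}. A n + A (j * n) - A (n + j * n) \<le> 2 * (A n - real n * rate)"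
proof (rule ccontr)
  let ?D = "\<lambda>j. A n + A (j * n) - A (n + j * n)"
  assume "\<not> ?thesis"
  then have "real J * (2 * (A n - real n * rate)) < (\<Sum>j = J..<2 * J. ?D j)"
    using sum_strict_mono[of "{J..<2 * J}" "\<lambda>_. 2 * (A n - real n * rate)" ?D] assms(2)
    by (auto simp: not_le)
  also have "\<dots> \<le> (\<Sum>j = 1..<2 * J. ?D j)"
    using assms subadd by (intro sum_mono2) (auto simp: algebra_simps)
  also have "\<dots> = real (2 * J) * A n - A (2 * J * n)"
    using assms(2) by (intro sum_defects) simp
  also have "\<dots> \<le> real (2 * J) * (A n - real n * rate)"
    using rate_le[of "2 * J * n"] assms by (simp add: algebra_simps)
  finally show False by (simp add: algebra_simps)
qed

lemma exists_small_defect_beyond: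
  assumes "1 \<le> n" and "n \<le> m"
  obtains p where "m < p" and "p \<le> 4 * m" and "A n + A p - A (n + p) \<le> 2 * (A n - real n * rate)"
proof -
  define J where "J = m div n + 1"
  have "J * n = m div n * n + n"
    by (simp add: J_def)
  moreover have "m div n * n \<le> m" "m < m div n * n + n"
    using assms(1) div_mult_mod_eq[of m n] mod_less_divisor[of n m] by linarith+
  ultimately have "m < J * n" "J * n \<le> 2 * m"
    using assms(2) by linarith+
  obtain j where j: "j \<in> {J..<2 * J}"
    and small: "A n + A (j * n) - A (n + j * n) \<le> 2 * (A n - real n * rate)"
    using exists_small_defect[OF assms(1), of J] by (auto simp: J_def)
  have "J * n \<le> j * n" "j * n \<le> 2 * (J * n)"
    using j by simp_all
  with \<open>m < J * n\<close> \<open>J * n \<le> 2 * m\<close> show ?thesis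
    by (intro that[of "j * n"] small) linarith+
qed

end

locale norm_subadditive_seq =
  fixes v :: "nat \<Rightarrow> 'a::real_normed_vector"
  assumes norm_add_index: "\<And>n m. 1 \<le> n \<Longrightarrow> 1 \<le> m \<Longrightarrow> norm (v (n + m)) \<le> norm (v n + v m)"
begin

sublocale subadditive_seq "\<lambda>n. norm (v n)"
proof
  show "norm (v (n + m)) \<le> norm (v n) + norm (v m)" if "1 \<le> n" "1 \<le> m" for n m
    using norm_add_index[OF that] norm_triangle_ineq by (rule order_trans)
qed simp

lemma dist_sgn_less_if_defect_less:
  assumes far: "\<And>x y :: 'a. \<epsilon> \<le> norm (sgn x - sgn y) \<Longrightarrow>
      norm (x + y) \<le> norm x + norm y - \<delta> * min (norm x) (norm y)"
    and "0 \<le> \<delta>" and "1 \<le> k" and "k \<le> p"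
    and defect: "norm (v k) + norm (v p) - norm (v (k + p)) < \<delta> * (real k * rate)"
  shows "dist (sgn (v k)) (sgn (v p)) < \<epsilon>"
proof (rule ccontr)
  assume "\<not> ?thesis"
  then have "norm (v k + v p) \<le> norm (v k) + norm (v p) - \<delta> * min (norm (v k)) (norm (v p))"
    by (intro far) (simp add: dist_norm)
  moreover have "norm (v (k + p)) \<le> norm (v k + v p)"
    using \<open>1 \<le> k\<close> \<open>k \<le> p\<close> by (intro norm_add_index) auto
  moreover have "\<delta> * (real k * rate) \<le> \<delta> * min (norm (v k)) (norm (v p))"
  proof -
    have "real k * rate \<le> real p * rate"
      using \<open>k \<le> p\<close> rate_nonneg by (simp add: mult_right_mono)
    then have "real k * rate \<le> min (norm (v k)) (norm (v p))"
      using rate_le[of k] rate_le[of p] \<open>1 \<le> k\<close> \<open>k \<le> p\<close> by simp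
    then show ?thesis
      using \<open>0 \<le> \<delta>\<close> by (rule mult_left_mono)
  qed
  ultimately show False
    using defect by linarith
qed

lemma dist_sgn_less_beyond:
  assumes far: "\<And>x y :: 'a. \<epsilon> \<le> norm (sgn x - sgn y) \<Longrightarrow>
      norm (x + y) \<le> norm x + norm y - \<delta> * min (norm x) (norm y)"
    and "0 \<le> \<delta>" and "0 < \<eta>" and "6 * \<eta> \<le> \<delta> * rate"
    and upper: "\<And>k. N \<le> k \<Longrightarrow> norm (v k) \<le> real k * rate + real k * \<eta>"
    and "1 \<le> N" and "N \<le> n" and "n \<le> m"
  shows "dist (sgn (v n)) (sgn (v m)) < 2 * \<epsilon>"
proof -
  have close: "dist (sgn (v k)) (sgn (v p)) < \<epsilon>"
    if "1 \<le> k" "k \<le> p" and "norm (v k) + norm (v p) - norm (v (k + p)) \<le> 5 * (real k * \<eta>)"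
    for k p
  proof (rule dist_sgn_less_if_defect_less[OF far \<open>0 \<le> \<delta>\<close> that(1,2)])
    have "0 < real k * \<eta>"
      using that(1) \<open>0 < \<eta>\<close> by simp
    moreover have "6 * (real k * \<eta>) \<le> \<delta> * (real k * rate)"
      using mult_left_mono[OF \<open>6 * \<eta> \<le> \<delta> * rate\<close>, of "real k"] by (simp add: algebra_simps)
    ultimately show "norm (v k) + norm (v p) - norm (v (k + p)) < \<delta> * (real k * rate)"
      using that(3) by linarith
  qed
  have "1 \<le> n"
    using \<open>1 \<le> N\<close> \<open>N \<le> n\<close> by simp
  then obtain p where "m < p" "p \<le> 4 * m"
    and small: "norm (v n) + norm (v p) - norm (v (n + p)) \<le> 2 * (norm (v n) - real n * rate)"
    using exists_small_defect_beyond \<open>n \<le> m\<close> by metis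
  have "norm (v n) - real n * rate \<le> real n * \<eta>"
    using upper[of n] \<open>N \<le> n\<close> by simp
  moreover have "0 \<le> real n * \<eta>"
    using \<open>0 < \<eta>\<close> by simp
  ultimately have "norm (v n) + norm (v p) - norm (v (n + p)) \<le> 5 * (real n * \<eta>)"
    using small[unfolded right_diff_distrib] by linarith
  then have "dist (sgn (v n)) (sgn (v p)) < \<epsilon>"
    using close \<open>1 \<le> n\<close> \<open>n \<le> m\<close> \<open>m < p\<close> by simp
  moreover have "norm (v m) + norm (v p) - norm (v (m + p)) \<le> 5 * (real m * \<eta>)"
  proof -
    have "real m * rate + real p * rate \<le> norm (v (m + p))"
      using rate_le[of "m + p"] \<open>m < p\<close> by (simp add: algebra_simps)
    moreover have "real p * \<eta> \<le> 4 * (real m * \<eta>)"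
      using \<open>p \<le> 4 * m\<close> \<open>0 < \<eta>\<close> by simp
    ultimately show ?thesis
      using upper[of m] upper[of p] \<open>N \<le> n\<close> \<open>n \<le> m\<close> \<open>m < p\<close> by simp
  qed
  then have "dist (sgn (v m)) (sgn (v p)) < \<epsilon>"
    using close \<open>1 \<le> n\<close> \<open>n \<le> m\<close> \<open>m < p\<close> by simp
  ultimately show ?thesis
    using dist_triangle2[of "sgn (v n)" "sgn (v m)" "sgn (v p)"] by linarith
qed

lemma Cauchy_sgn:
  assumes convex: "uniformly_convex TYPE('a)" and "0 < rate"
  shows "Cauchy (\<lambda>n. sgn (v n))"
proof (rule metric_CauchyI)
  fix \<epsilon> :: real assume "0 < \<epsilon>"
  obtain \<delta> where "0 < \<delta>" and far: "\<And>x y :: 'a. \<epsilon> / 2 \<le> norm (sgn x - sgn y) \<Longrightarrow>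
      norm (x + y) \<le> norm x + norm y - \<delta> * min (norm x) (norm y)"
    using uniformly_convex_norm_add_le[OF convex half_gt_zero[OF \<open>0 < \<epsilon>\<close>]] by metis
  define \<eta> where "\<eta> = \<delta> * rate / 6"
  have "0 < \<eta>"
    using \<open>0 < rate\<close> \<open>0 < \<delta>\<close> by (simp add: \<eta>_def)
  obtain N where "1 \<le> N" and upper: "\<And>k. N \<le> k \<Longrightarrow> norm (v k) \<le> real k * rate + real k * \<eta>"
    using eventually_conj[OF eventually_le_rate[OF \<open>0 < \<eta>\<close>] eventually_ge_at_top[of 1]]
    unfolding eventually_sequentially by (auto simp: algebra_simps)
  have dist_less: "dist (sgn (v n)) (sgn (v m)) < \<epsilon>" if "N \<le> n" "n \<le> m" for n m
    using dist_sgn_less_beyond[where \<epsilon> = "\<epsilon> / 2", OF far _ \<open>0 < \<eta>\<close> _ upper \<open>1 \<le> N\<close> that] \<open>0 < \<delta>\<close>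
    by (simp add: \<eta>_def)
  show "\<exists>M. \<forall>m\<ge>M. \<forall>n\<ge>M. dist (sgn (v m)) (sgn (v n)) < \<epsilon>"
  proof (intro exI allI impI)
    fix m n assume "N \<le> m" "N \<le> n"
    then show "dist (sgn (v m)) (sgn (v n)) < \<epsilon>"
      using dist_less[of m n] dist_less[of n m] by (cases "m \<le> n") (simp_all add: dist_commute)
  qed
qed

end

theorem mainTheorem1:
  fixes v :: "nat \<Rightarrow> 'a::banach"
  assumes "uniformly_convex TYPE('a)"
    and "\<And>n m. n \<ge> 1 \<Longrightarrow> m \<ge> 1 \<Longrightarrow> norm (v (n + m)) \<le> norm (v n + v m)"
  shows "\<exists>L. (\<lambda>n. (1 / real n) *\<^sub>R v n) \<longlonglongrightarrow> L"
proof -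
  interpret norm_subadditive_seq v
    using assms(2) by unfold_locales
  have scaled: "(1 / real n) *\<^sub>R v n = (norm (v n) / real n) *\<^sub>R sgn (v n)" for n
    by (cases "v n = 0") (simp_all add: sgn_div_norm)
  show ?thesis
  proof (cases "rate = 0")
    case True
    then have "(\<lambda>n. norm ((1 / real n) *\<^sub>R v n)) \<longlonglongrightarrow> 0"
      using quotient_tendsto_rate by simp
    then have "(\<lambda>n. (1 / real n) *\<^sub>R v n) \<longlonglongrightarrow> 0"
      by (rule tendsto_norm_zero_cancel)
    then show ?thesis ..
  next
    case False
    with rate_nonneg have "0 < rate" by simp
    then obtain L where "(\<lambda>n. sgn (v n)) \<longlonglongrightarrow> L"
      using Cauchy_sgn[OF assms(1)] Cauchy_convergent_iff convergent_def by blast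
    then have "(\<lambda>n. (norm (v n) / real n) *\<^sub>R sgn (v n)) \<longlonglongrightarrow> rate *\<^sub>R L"
      using quotient_tendsto_rate by (intro tendsto_scaleR)
    then show ?thesis
      unfolding scaled by blast
  qed
qed

end
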